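(* Let $\mathcal{L}=(L,\wedge,\vee,0,1)$ be a complete lattice and let $C\subseteq L$ be a chain consisting of strongly irreducible elements of $L$. Then $\bigwedge C$ is strongly irreducible in $L$.
   Context: An element $p$ of a lattice is strongly irreducible if for all $a,b\in L$: $a\wedge b\leq p$ implies $a\leq p$ or $b\leq p$. *)

theory Defs
  imports Main
begin

definition strongly_irreducible :: "'a::lattice \<Rightarrow> bool" where
  "strongly_irreducible p \<longleftrightarrow> (\<forall>a b. inf a b \<le> p \<longrightarrow> a \<le> p \<or> b \<le> p)"

end

theory Submission
  imports Defs
begin

text \<open>Since \<open>C\<close> is a chain, if \<open>a \<sqinter> b \<le> \<Sqinter>C\<close> while \<open>a \<nleq> c\<^sub>1\<close> and \<open>b \<nleq> c\<^sub>2\<close> for some \<open>c\<^sub>1, c\<^sub>2 \<in> C\<close>, then the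
  smaller of \<open>c\<^sub>1, c\<^sub>2\<close> lies above \<open>a \<sqinter> b\<close> but above neither \<open>a\<close> nor \<open>b\<close>.\<close>

lemma strongly_irreducible_downward:
  assumes "strongly_irreducible p" and "inf a b \<le> q" and "q \<le> p"
  shows "a \<le> p \<or> b \<le> p"
  using assms unfolding strongly_irreducible_def by (meson order_trans)

lemma chain_lower_bound_of_two:
  assumes "Complete_Partial_Order.chain (\<le>) C" and "c\<^sub>1 \<in> C" and "c\<^sub>2 \<in> C"
  obtains c where "c \<in> C" and "c \<le> c\<^sub>1" and "c \<le> c\<^sub>2"
  using assms by (metis chainD order_refl)

theorem proposition1p13:
  fixes C :: "'a::complete_lattice set"
  assumes "Complete_Partial_Order.chain (\<le>) C"
    and "\<forall>c\<in>C. strongly_irreducible c"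
  shows "strongly_irreducible (Inf C)"
  unfolding strongly_irreducible_def
proof (intro allI impI, rule ccontr)
  fix a b :: 'a
  assume below: "inf a b \<le> Inf C" and "\<not> (a \<le> Inf C \<or> b \<le> Inf C)"
  then obtain c\<^sub>1 c\<^sub>2 where "c\<^sub>1 \<in> C" "\<not> a \<le> c\<^sub>1" and "c\<^sub>2 \<in> C" "\<not> b \<le> c\<^sub>2"
    by (meson le_Inf_iff)
  then obtain c where c: "c \<in> C" and "c \<le> c\<^sub>1" and "c \<le> c\<^sub>2"
    using chain_lower_bound_of_two assms(1) by blast
  have "\<not> a \<le> c" and "\<not> b \<le> c"
    using \<open>\<not> a \<le> c\<^sub>1\<close> \<open>c \<le> c\<^sub>1\<close> \<open>\<not> b \<le> c\<^sub>2\<close> \<open>c \<le> c\<^sub>2\<close> order_trans by blast+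
  moreover have "a \<le> c \<or> b \<le> c"
    using strongly_irreducible_downward[OF _ below Inf_lower[OF c]] assms(2) c by blast
  ultimately show False by blast
qed

end
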